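(* Consider the Decaying-$\epsilon$-FOCuS procedure (described in the context) on $M>1$ streams, where stream 1 has a change-point at $\nu=0$ (every observation of stream 1 is $\mathcal{N}(\mu_1,1)$ with $\mu_1\ne0$, all other observations $\mathcal{N}(0,1)$). Let $t_0$ be the smallest time step such that for all $t>t_0$, $T_t^{(1)}>\max_{m\in[M]\setminus\{1\}}T_t^{(m)}$. Then $\mathbb{E}_{M,0}[t_0]<\infty$.
   Context: Setting: there are $M$ independent data streams. At each time $t=1,2,\dots$ an agent selects one stream $A_t\in\{1,\dots,M\}$ and observes one value $X_t\in\mathbb{R}$ from it. The $i$-th observation taken from stream $m$ is denoted $X_i^{(m)}$. Pre-change observations are $\mathcal{N}(0,1)$. Stream 1 has a change-point $\nu$: if $A_t=1$ and $t>\nu$ then $X_t\sim\mathcal{N}(\mu_1,1)$ with $\mu_1\neq0$; otherwise $X_t\sim\mathcal{N}(0,1)$; observations are conditionally independent given the selections. $\mathbb{E}_{M,\nu}$ denotes expectation for $M$ streams with change at $\nu$ in stream 1. $\mathcal{F}_t=\sigma(A_1,X_1,\dots,A_t,X_t)$. The sampling process and statistics are defined for all $t\ge 0$. Decaying-$\epsilon$-FOCuS: let $N_t^{(m)}$ be the number of times stream $m$ was selected up to and including time $t$. The local GLR statistic is $T_t^{(m)}=\max_{0\le k<N_t^{(m)}}\frac{(\sum_{i=k+1}^{N_t^{(m)}}X_i^{(m)})^2}{2(N_t^{(m)}-k)}$ (and $T_t^{(m)}=0$ if $N_t^{(m)}=0$); $M_t=\arg\max_m T_t^{(m)}$. The local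 change-point estimate $\hat\nu_t^{(m)}$ is the time at which stream $m$'s $\hat k$-th observation was taken, where $\hat k$ is the maximizing index $k$ in $T_t^{(m)}$ (time $0$ if $\hat k=0$ or $N_t^{(m)}=0$); the global estimate is $\hat\nu_t=\hat\nu_t^{(M_t)}$; ties are broken uniformly at random. Initially $\hat\nu_0=0$, $M_0$ uniform on $[M]$. At time $t$, set $\epsilon_t=\min\{1, M/\max(1,t-\hat\nu_{t-1})^{1/3}\}$, draw $G_t\sim\mathrm{Bernoulli}(\epsilon_t)$ (conditionally on $\mathcal{F}_{t-1}$); if $G_t=1$ choose $A_t$ uniformly from $[M]$, otherwise $A_t=M_{t-1}$; then observe $X_t$ and update the statistics. *)

theory Defs
  imports "HOL-Probability.Probability"
begin

text \<open>Noise m i : noise of the i-th observation taken from stream m (standard normal);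
  Gate t    : uniform [0,1], G_t = (Gate t < eps_t)  (Bernoulli(eps_t));
  Pick t    : uniform [0,1], used to pick a uniform stream in {1..M} when exploring;
  TieM t    : uniform [0,1], uniform tie-breaking for M_t;
  TieK t    : uniform [0,1], uniform tie-breaking for the maximising index k.\<close>

datatype idx = Noise nat nat | Gate nat | Pick nat | TieM nat | TieK nat

text \<open>Streams are 1..M; stream 1 has change at nu = 0, so every observation of it
  has mean mu.  The i-th observation (i >= 1) of stream m:\<close>
definition obs :: "real \<Rightarrow> (idx \<Rightarrow> real) \<Rightarrow> nat \<Rightarrow> nat \<Rightarrow> real" where
  "obs mu y m i = (if m = 1 then mu else 0) + y (Noise m i)"

text \<open>A history is the list [A_1, ..., A_t] of selected streams.\<close>
definition Afun :: "nat list \<Rightarrow> nat \<Rightarrow> nat" where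
  "Afun as s = (if 1 \<le> s \<and> s \<le> length as then as ! (s - 1) else 0)"

definition Nc :: "nat list \<Rightarrow> nat \<Rightarrow> nat \<Rightarrow> nat" where
  "Nc as m t = card {s \<in> {1..t}. Afun as s = m}"

definition Tterm :: "(nat \<Rightarrow> real) \<Rightarrow> nat \<Rightarrow> nat \<Rightarrow> real" where
  "Tterm x n k = (\<Sum>i = k+1..n. x i)\<^sup>2 / (2 * real (n - k))"

definition Tstat :: "(nat \<Rightarrow> real) \<Rightarrow> nat \<Rightarrow> real" where
  "Tstat x n = (if n = 0 then 0 else Max (Tterm x n ` {..<n}))"

text \<open>Uniform choice from a finite nonempty set S driven by w uniform on [0,1].\<close>
definition pick_tie :: "real \<Rightarrow> nat set \<Rightarrow> nat" where
  "pick_tie w S = (let l = sorted_list_of_set S in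
       l ! min (nat \<lfloor>w * real (length l)\<rfloor>) (length l - 1))"

definition Tm :: "real \<Rightarrow> (idx \<Rightarrow> real) \<Rightarrow> nat list \<Rightarrow> nat \<Rightarrow> nat \<Rightarrow> real" where
  "Tm mu y as t m = Tstat (obs mu y m) (Nc as m t)"

text \<open>M_t (for t = 0 all statistics vanish, so M_0 is uniform on {1..M}).\<close>
definition Mt :: "nat \<Rightarrow> real \<Rightarrow> (idx \<Rightarrow> real) \<Rightarrow> nat list \<Rightarrow> nat \<Rightarrow> nat" where
  "Mt M mu y as t = pick_tie (y (TieM t))
     {m \<in> {1..M}. Tm mu y as t m = Max (Tm mu y as t ` {1..M})}"

definition khat :: "(nat \<Rightarrow> real) \<Rightarrow> nat \<Rightarrow> real \<Rightarrow> nat" where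
  "khat x n w = (if n = 0 then 0 else pick_tie w {k \<in> {..<n}. Tterm x n k = Tstat x n})"

definition sel_time :: "nat list \<Rightarrow> nat \<Rightarrow> nat \<Rightarrow> nat" where
  "sel_time as m k = (if k = 0 then 0 else (LEAST s. Nc as m s = k))"

definition nuhat :: "nat \<Rightarrow> real \<Rightarrow> (idx \<Rightarrow> real) \<Rightarrow> nat list \<Rightarrow> nat \<Rightarrow> nat" where
  "nuhat M mu y as t = (let m = Mt M mu y as t; n = Nc as m t in
      if n = 0 then 0 else sel_time as m (khat (obs mu y m) n (y (TieK t))))"

definition eps :: "nat \<Rightarrow> nat \<Rightarrow> nat \<Rightarrow> real" where
  "eps M nu t = min 1 (real M / (max 1 (real t - real nu)) powr (1/3))"

definition next_choice :: "nat \<Rightarrow> real \<Rightarrow> (idx \<Rightarrow> real) \<Rightarrow> nat list \<Rightarrow> nat \<Rightarrow> nat" where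
  "next_choice M mu y as t =
     (if y (Gate t) < eps M (nuhat M mu y as (t - 1)) t
      then min M (1 + nat \<lfloor>real M * y (Pick t)\<rfloor>)
      else Mt M mu y as (t - 1))"

fun hist :: "nat \<Rightarrow> real \<Rightarrow> (idx \<Rightarrow> real) \<Rightarrow> nat \<Rightarrow> nat list" where
  "hist M mu y 0 = []"
| "hist M mu y (Suc t) = hist M mu y t @ [next_choice M mu y (hist M mu y t) (Suc t)]"

definition T_run :: "nat \<Rightarrow> real \<Rightarrow> (idx \<Rightarrow> real) \<Rightarrow> nat \<Rightarrow> nat \<Rightarrow> real" where
  "T_run M mu y t m = Tm mu y (hist M mu y t) t m"

definition dominates_after :: "nat \<Rightarrow> real \<Rightarrow> (idx \<Rightarrow> real) \<Rightarrow> nat \<Rightarrow> bool" where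
  "dominates_after M mu y t0 = (\<forall>t > t0. T_run M mu y t 1 > Max ((T_run M mu y t) ` ({1..M} - {1})))"

definition t0 :: "nat \<Rightarrow> real \<Rightarrow> (idx \<Rightarrow> real) \<Rightarrow> enat" where
  "t0 M mu y = (if \<exists>t. dominates_after M mu y t then enat (LEAST t. dominates_after M mu y t) else \<infinity>)"

end

theory Submission
  imports Defs
begin

(* Exploration alone feeds stream 1: at time s the procedure explores with probability
   eps >= s^(-1/3), whatever its history, and then picks stream 1 with probability 1/M.
   By Hoeffding's inequality stream 1 therefore has at least beta_t = t^(2/3)/(2M)
   observations at time t, except with probability exp(-t^(1/3)/(2M^2)).  If moreover no
   partial noise sum of stream 1 of length at least beta_t exceeds half its drift, and no
   segment sum of a null stream of length l exceeds |mu| sqrt(beta_t l)/2, then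
   T^(1)_t >= mu^2 beta_t/8 exceeds every other statistic.  These conditions concern the raw
   noise over all segments up to time t, so the adaptive sampling never has to be
   conditioned on; Gaussian 18th-moment bounds and a union bound show that they fail with
   probability O(t^-4).  Hence P(t0 > n) <= sum_{t>n} O(t^-4) = O(n^-2), which is summable,
   and E[t0] = sum_n P(t0 > n) is finite. *)

section \<open>The procedure along a run\<close>

lemma length_hist [simp]: "length (hist M mu y t) = t"
  by (induction t) auto

lemma Afun_hist:
  assumes "1 \<le> s" "s \<le> t"
  shows "Afun (hist M mu y t) s = next_choice M mu y (hist M mu y (s - 1)) s"
proof -
  have "hist M mu y t ! r = next_choice M mu y (hist M mu y r) (Suc r)" if "r < t" for r
    using that by (induction t) (auto simp: nth_append less_Suc_eq)
  then show ?thesis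
    using assms unfolding Afun_def by simp
qed

lemma Nc_le: "Nc as m t \<le> t"
proof -
  have "Nc as m t \<le> card {1..t}"
    unfolding Nc_def by (rule card_mono) auto
  then show ?thesis by simp
qed

lemma eps_ge_inverse_cbrt:
  assumes "1 \<le> s" "1 \<le> M"
  shows "1 / real s powr (1/3) \<le> eps M nu s"
proof -
  have "max 1 (real s - real nu) powr (1/3) \<le> real s powr (1/3)"
    using assms by (intro powr_mono2) auto
  then have "1 / real s powr (1/3) \<le> 1 / max 1 (real s - real nu) powr (1/3)"
    by (simp add: frac_le)
  also have "\<dots> \<le> real M / max 1 (real s - real nu) powr (1/3)"
    using assms by (simp add: divide_right_mono)
  finally show ?thesis
    using assms by (simp add: eps_def ge_one_powr_ge_zero)
qed

definition forced_to_stream1 :: "nat \<Rightarrow> (idx \<Rightarrow> real) \<Rightarrow> nat \<Rightarrow> bool" where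
  "forced_to_stream1 M y s \<longleftrightarrow>
     y (Gate s) < 1 / real s powr (1/3) \<and> 0 \<le> y (Pick s) \<and> y (Pick s) < 1 / real M"

text \<open>Whatever the history, \<open>eps\<close> is at least \<open>s powr (-1/3)\<close>, so this event makes
  the procedure explore at time \<open>s\<close> and pick stream 1.\<close>
lemma next_choice_forced:
  assumes "1 \<le> s" "1 \<le> M" "forced_to_stream1 M y s"
  shows "next_choice M mu y as s = 1"
proof -
  have explore: "y (Gate s) < eps M (nuhat M mu y as (s - 1)) s"
    using assms eps_ge_inverse_cbrt[OF assms(1,2)]
    unfolding forced_to_stream1_def by (meson less_le_trans)
  have "0 \<le> real M * y (Pick s)" "real M * y (Pick s) < 1"
    using assms unfolding forced_to_stream1_def by (simp_all add: field_simps)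
  then have "\<lfloor>real M * y (Pick s)\<rfloor> = 0"
    by (simp add: floor_eq_iff)
  then show ?thesis
    using explore assms(2) unfolding next_choice_def by simp
qed

lemma card_forced_le_Nc:
  assumes "1 \<le> M"
  shows "card {s \<in> {1..t}. forced_to_stream1 M y s} \<le> Nc (hist M mu y t) 1 t"
  unfolding Nc_def
  using assms Afun_hist[of _ t M mu y] next_choice_forced[of _ M y]
  by (intro card_mono) auto

lemma Tterm_le_Tstat: "k < n \<Longrightarrow> Tterm x n k \<le> Tstat x n"
  unfolding Tstat_def by auto

lemma Tstat_less:
  assumes "0 < c" "\<And>k. k < n \<Longrightarrow> Tterm x n k < c"
  shows "Tstat x n < c"
proof (cases "n = 0")
  case False
  then have "Max (Tterm x n ` {..<n}) < c"
    using assms by (subst Max_less_iff) auto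
  with False show ?thesis by (simp add: Tstat_def)
qed (use assms in \<open>simp add: Tstat_def\<close>)

lemma signal_plus_noise_sq_ge:
  fixes a w N :: real
  assumes "N > 0" "\<bar>w\<bar> \<le> \<bar>a\<bar> * N / 2"
  shows "a\<^sup>2 * N / 8 \<le> (N * a + w)\<^sup>2 / (2 * N)"
proof -
  have "\<bar>N * a\<bar> = \<bar>a\<bar> * N"
    using assms by (simp add: abs_mult)
  then have "\<bar>a\<bar> * N / 2 \<le> \<bar>N * a + w\<bar>"
    using assms abs_triangle_ineq2[of "N * a" "- w"] by simp
  then have "(\<bar>a\<bar> * N / 2)\<^sup>2 \<le> \<bar>N * a + w\<bar>\<^sup>2"
    using assms by (intro power_mono) auto
  then show ?thesis
    using assms by (simp add: field_simps power2_eq_square)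
qed

text \<open>Both sides are compared with the threshold \<open>mu\<^sup>2 \<beta> / 8\<close>.\<close>
lemma stream1_dominates:
  assumes M: "M > 1" and mu: "mu \<noteq> 0" and beta: "\<beta> > 0"
    and samples: "\<beta> \<le> real (card {s \<in> {1..t}. forced_to_stream1 M y s})"
    and stream1: "\<And>n. \<beta> \<le> real n \<Longrightarrow> n \<le> t \<Longrightarrow> \<bar>\<Sum>i=1..n. y (Noise 1 i)\<bar> \<le> \<bar>mu\<bar> * real n / 2"
    and null: "\<And>m k n. m \<in> {2..M} \<Longrightarrow> k < n \<Longrightarrow> n \<le> t \<Longrightarrow>
        (\<Sum>i=k+1..n. y (Noise m i))\<^sup>2 < mu\<^sup>2 * \<beta> * real (n - k) / 4"
  shows "Max (T_run M mu y t ` ({1..M} - {1})) < T_run M mu y t 1"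
proof -
  define N where "N = Nc (hist M mu y t) 1 t"
  have N_ge: "\<beta> \<le> real N"
    using samples card_forced_le_Nc[of M t y mu] M unfolding N_def by linarith
  then have "0 < N" using beta by linarith
  have "mu\<^sup>2 * \<beta> / 8 \<le> mu\<^sup>2 * real N / 8"
    using N_ge by (simp add: mult_left_mono)
  also have "\<dots> \<le> (real N * mu + (\<Sum>i=1..N. y (Noise 1 i)))\<^sup>2 / (2 * real N)"
    using \<open>0 < N\<close> stream1[OF N_ge] Nc_le[of _ 1 t]
    by (intro signal_plus_noise_sq_ge) (auto simp: N_def)
  also have "\<dots> = Tterm (obs mu y 1) N 0"
    unfolding Tterm_def obs_def by (simp add: sum.distrib)
  also have "\<dots> \<le> T_run M mu y t 1"
    using \<open>0 < N\<close> Tterm_le_Tstat unfolding T_run_def Tm_def N_def by blast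
  finally have stream1_large: "mu\<^sup>2 * \<beta> / 8 \<le> T_run M mu y t 1" .
  have "T_run M mu y t m < mu\<^sup>2 * \<beta> / 8" if m: "m \<in> {1..M} - {1}" for m
    unfolding T_run_def Tm_def
  proof (rule Tstat_less)
    show "0 < mu\<^sup>2 * \<beta> / 8" using mu beta by simp
    fix k assume k: "k < Nc (hist M mu y t) m t"
    have "(\<Sum>i=k+1..Nc (hist M mu y t) m t. y (Noise m i))\<^sup>2
        < mu\<^sup>2 * \<beta> * real (Nc (hist M mu y t) m t - k) / 4"
      using m k by (intro null Nc_le) auto
    then show "Tterm (obs mu y m) (Nc (hist M mu y t) m t) k < mu\<^sup>2 * \<beta> / 8"
      using m k unfolding Tterm_def obs_def by (simp add: field_simps)
  qed
  moreover have "M \<in> {1..M} - {1}"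
    using M by simp
  ultimately have "Max (T_run M mu y t ` ({1..M} - {1})) < mu\<^sup>2 * \<beta> / 8"
    by (subst Max_less_iff) auto
  with stream1_large show ?thesis by linarith
qed

section \<open>Measurability\<close>

context
  fixes P :: "'a measure" and Y :: "idx \<Rightarrow> 'a \<Rightarrow> real"
  assumes measurable_Y [measurable]: "\<And>i. Y i \<in> borel_measurable P"
begin

lemma measurable_Tterm [measurable]:
  "(\<lambda>\<omega>. Tterm (obs mu (\<lambda>i. Y i \<omega>) m) n k) \<in> borel_measurable P"
  unfolding Tterm_def obs_def by measurable

lemma measurable_Tstat [measurable]:
  "(\<lambda>\<omega>. Tstat (obs mu (\<lambda>i. Y i \<omega>) m) n) \<in> borel_measurable P"
  unfolding Tstat_def by (auto intro!: borel_measurable_Max)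

lemma measurable_Tm [measurable]: "(\<lambda>\<omega>. Tm mu (\<lambda>i. Y i \<omega>) as t m) \<in> borel_measurable P"
  unfolding Tm_def by measurable

text \<open>Split over the finitely many possible values of \<open>S\<close>.\<close>
lemma measurable_pick_tie:
  assumes "finite F" and S_sub: "\<And>\<omega>. \<omega> \<in> space P \<Longrightarrow> S \<omega> \<subseteq> F"
    and S_sets: "\<And>A. A \<subseteq> F \<Longrightarrow> {\<omega> \<in> space P. S \<omega> = A} \<in> sets P"
    and [measurable]: "w \<in> borel_measurable P"
  shows "(\<lambda>\<omega>. pick_tie (w \<omega>) (S \<omega>)) \<in> measurable P (count_space UNIV)"
  unfolding measurable_count_space_eq2_countable
proof safe
  fix a :: nat
  have [measurable]: "(\<lambda>\<omega>. pick_tie (w \<omega>) A) \<in> measurable P (count_space UNIV)" for A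
    unfolding pick_tie_def Let_def by measurable
  have "(\<lambda>\<omega>. pick_tie (w \<omega>) (S \<omega>)) -` {a} \<inter> space P
     = (\<Union>A\<in>Pow F. {\<omega> \<in> space P. S \<omega> = A} \<inter> ((\<lambda>\<omega>. pick_tie (w \<omega>) A) -` {a} \<inter> space P))"
    using S_sub by auto
  also have "\<dots> \<in> sets P"
    using \<open>finite F\<close> S_sets by (intro sets.finite_UN) auto
  finally show "(\<lambda>\<omega>. pick_tie (w \<omega>) (S \<omega>)) -` {a} \<inter> space P \<in> sets P" .
qed simp

lemma measurable_Mt [measurable]:
  "(\<lambda>\<omega>. Mt M mu (\<lambda>i. Y i \<omega>) as t) \<in> measurable P (count_space UNIV)"
  unfolding Mt_def
proof (rule measurable_pick_tie[where F = "{1..M}"])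
  fix A assume "A \<subseteq> {1..M}"
  let ?T = "\<lambda>\<omega> m. Tm mu (\<lambda>i. Y i \<omega>) as t m"
  have [measurable]: "(\<lambda>\<omega>. Max (?T \<omega> ` {1..M})) \<in> borel_measurable P"
    by (intro borel_measurable_Max) auto
  have "{\<omega> \<in> space P. {m \<in> {1..M}. ?T \<omega> m = Max (?T \<omega> ` {1..M})} = A}
    = {\<omega> \<in> space P. \<forall>m\<in>{1..M}. (?T \<omega> m = Max (?T \<omega> ` {1..M})) = (m \<in> A)}"
    using \<open>A \<subseteq> {1..M}\<close> by auto
  also have "\<dots> \<in> sets P" by measurable
  finally show "{\<omega> \<in> space P. {m \<in> {1..M}. ?T \<omega> m = Max (?T \<omega> ` {1..M})} = A} \<in> sets P" .
qed auto

lemma measurable_khat [measurable]: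
  "(\<lambda>\<omega>. khat (obs mu (\<lambda>i. Y i \<omega>) m) n (Y (TieK t) \<omega>)) \<in> measurable P (count_space UNIV)"
proof (cases "n = 0")
  case False
  let ?x = "\<lambda>\<omega>. obs mu (\<lambda>i. Y i \<omega>) m"
  have "(\<lambda>\<omega>. pick_tie (Y (TieK t) \<omega>) {k \<in> {..<n}. Tterm (?x \<omega>) n k = Tstat (?x \<omega>) n})
    \<in> measurable P (count_space UNIV)"
  proof (rule measurable_pick_tie[where F = "{..<n}"])
    fix A assume "A \<subseteq> {..<n}"
    then have "{\<omega> \<in> space P. {k \<in> {..<n}. Tterm (?x \<omega>) n k = Tstat (?x \<omega>) n} = A}
      = {\<omega> \<in> space P. \<forall>k\<in>{..<n}. (Tterm (?x \<omega>) n k = Tstat (?x \<omega>) n) = (k \<in> A)}"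
      by auto
    also have "\<dots> \<in> sets P" by measurable
    finally show "{\<omega> \<in> space P. {k \<in> {..<n}. Tterm (?x \<omega>) n k = Tstat (?x \<omega>) n} = A} \<in> sets P" .
  qed auto
  with False show ?thesis unfolding khat_def by simp
qed (simp add: khat_def)

lemma measurable_nuhat [measurable]:
  "(\<lambda>\<omega>. nuhat M mu (\<lambda>i. Y i \<omega>) as t) \<in> measurable P (count_space UNIV)"
proof -
  have "(\<lambda>\<omega>. (\<lambda>m \<omega>. if Nc as m t = 0 then 0
      else sel_time as m (khat (obs mu (\<lambda>i. Y i \<omega>) m) (Nc as m t) (Y (TieK t) \<omega>)))
      (Mt M mu (\<lambda>i. Y i \<omega>) as t) \<omega>) \<in> measurable P (count_space UNIV)"
    by (rule measurable_compose_countable[OF _ measurable_Mt]) measurable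
  then show ?thesis unfolding nuhat_def Let_def by simp
qed

lemma measurable_next_choice [measurable]:
  "(\<lambda>\<omega>. next_choice M mu (\<lambda>i. Y i \<omega>) as t) \<in> measurable P (count_space UNIV)"
proof -
  have [measurable]: "(\<lambda>\<omega>. eps M (nuhat M mu (\<lambda>i. Y i \<omega>) as (t - 1)) t) \<in> borel_measurable P"
    by (rule measurable_compose_countable[OF _ measurable_nuhat, where f = "\<lambda>n \<omega>. eps M n t"])
      simp
  show ?thesis unfolding next_choice_def by measurable
qed

lemma measurable_hist [measurable]:
  "(\<lambda>\<omega>. hist M mu (\<lambda>i. Y i \<omega>) t) \<in> measurable P (count_space UNIV)"
proof (induction t)
  case (Suc t)
  have "(\<lambda>\<omega>. (\<lambda>as \<omega>. as @ [next_choice M mu (\<lambda>i. Y i \<omega>) as (Suc t)])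
      (hist M mu (\<lambda>i. Y i \<omega>) t) \<omega>) \<in> measurable P (count_space UNIV)"
    by (rule measurable_compose_countable[OF _ Suc]) measurable
  then show ?case by simp
qed simp

lemma measurable_T_run [measurable]:
  "(\<lambda>\<omega>. T_run M mu (\<lambda>i. Y i \<omega>) t m) \<in> borel_measurable P"
proof -
  have "(\<lambda>\<omega>. (\<lambda>as \<omega>. Tm mu (\<lambda>i. Y i \<omega>) as t m) (hist M mu (\<lambda>i. Y i \<omega>) t) \<omega>)
      \<in> borel_measurable P"
    by (rule measurable_compose_countable[OF _ measurable_hist]) measurable
  then show ?thesis unfolding T_run_def by simp
qed

lemma pred_dominates_after [measurable]:
  "Measurable.pred P (\<lambda>\<omega>. dominates_after M mu (\<lambda>i. Y i \<omega>) n)"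
proof -
  have [measurable]:
    "(\<lambda>\<omega>. Max (T_run M mu (\<lambda>i. Y i \<omega>) t ` ({1..M} - {1}))) \<in> borel_measurable P" for t
    by (intro borel_measurable_Max) auto
  show ?thesis unfolding dominates_after_def by measurable
qed

lemma measurable_t0: "(\<lambda>\<omega>. t0 M mu (\<lambda>i. Y i \<omega>)) \<in> measurable P (count_space UNIV)"
  unfolding t0_def by measurable

end

lemma (in prob_space) prob_uniform_interval:
  assumes X: "distributed M lborel X (indicator {0..1})"
    and A: "A \<in> sets borel" "{0..1} \<inter> A = {a..<b}" and "a \<le> b"
  shows "prob (X -` A \<inter> space M) = b - a"
proof -
  have "emeasure M (X -` A \<inter> space M) = (\<integral>\<^sup>+x. indicator {0..1} x * indicator A x \<partial>lborel)"
    using distributed_emeasure[OF X] A by simp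
  also have "\<dots> = emeasure lborel {a..<b}"
    using A by (simp add: indicator_inter_arith[symmetric])
  also have "\<dots> = ennreal (b - a)"
    using \<open>a \<le> b\<close> by simp
  finally show ?thesis
    using \<open>a \<le> b\<close> by (simp add: measure_def)
qed

lemma (in prob_space) std_normal_tail_le_moment:
  assumes Z: "distributed M lborel Z (\<lambda>x. ennreal (std_normal_density x))" and "r > 0"
  shows "prob {\<omega> \<in> space M. r \<le> \<bar>Z \<omega>\<bar>} \<le> fact (2 * q) / (2 ^ q * fact q) / r ^ (2 * q)"
proof -
  have [measurable]: "Z \<in> borel_measurable M"
    using distributed_measurable[OF Z] by simp
  have integrable: "integrable M (\<lambda>\<omega>. Z \<omega> ^ (2 * q))"
    using distributed_integrable[OF Z, of "\<lambda>x. x ^ (2 * q)"] integrable_std_normal_moment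
    by simp
  have "r ^ (2 * q) \<le> Z \<omega> ^ (2 * q)" if "r \<le> \<bar>Z \<omega>\<bar>" for \<omega>
    using power_mono[OF that, of "2 * q"] \<open>r > 0\<close> by (simp add: power_even_abs)
  then have "prob {\<omega> \<in> space M. r \<le> \<bar>Z \<omega>\<bar>} \<le> prob {\<omega> \<in> space M. r ^ (2 * q) \<le> Z \<omega> ^ (2 * q)}"
    by (intro finite_measure_mono) auto
  also have "\<dots> \<le> (\<integral>\<omega>. Z \<omega> ^ (2 * q) \<partial>M) / r ^ (2 * q)"
    using integrable \<open>r > 0\<close> by (intro integral_Markov_inequality_measure) auto
  also have "(\<integral>\<omega>. Z \<omega> ^ (2 * q) \<partial>M) = fact (2 * q) / (2 ^ q * fact q)"
    using distributed_integral[OF Z, of "\<lambda>x. x ^ (2 * q)"] integral_std_normal_moment_even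
    by simp
  finally show ?thesis .
qed

lemma real_sqrt_power_even: "0 \<le> x \<Longrightarrow> sqrt x ^ (2 * k) = x ^ k"
  by (simp add: power_mult)

lemma power_mult_divide_power_le:
  fixes x c :: real
  assumes "1 \<le> x" "0 \<le> c" "a + d \<le> b"
  shows "x ^ a * (c / x ^ b) \<le> c / x ^ d"
proof -
  have "x ^ a * x ^ d \<le> x ^ b"
    using assms by (simp add: power_increasing flip: power_add)
  then show ?thesis
    using assms by (simp add: field_simps mult_left_mono)
qed

lemma exp_neg_le_fact_div_power:
  fixes x :: real
  assumes "x > 0"
  shows "exp (- x) \<le> fact n / x ^ n"
proof -
  have "x ^ n / fact n = (\<Sum>k\<in>{n}. x ^ k /\<^sub>R fact k)"
    by (simp add: divide_inverse mult.commute)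
  also have "\<dots> \<le> (\<Sum>k. x ^ k /\<^sub>R fact k)"
    using assms summable_exp_generic[of x] by (intro sum_le_suminf) auto
  also have "\<dots> = exp x"
    by (simp add: exp_def)
  finally show ?thesis
    using assms by (simp add: exp_minus field_simps)
qed

lemma summable_inverse_Suc_square: "summable (\<lambda>j. 1 / real (Suc j) ^ 2)"
proof -
  have "summable (\<lambda>n. inverse (real n ^ 2))"
    by (rule inverse_power_summable) simp
  then show ?thesis
    by (subst (asm) summable_Suc_iff[symmetric]) (simp add: inverse_eq_divide)
qed

text \<open>Uses \<open>(n+1+j)\<^sup>4 \<ge> (n+1)\<^sup>2 (j+1)\<^sup>2\<close>.\<close>
lemma suminf_inverse_power4_tail_le:
  assumes "K \<ge> 0"
  shows "(\<Sum>j. ennreal (K / real (Suc n + j) ^ 4))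
    \<le> ennreal (K / real (Suc n) ^ 2 * (\<Sum>j. 1 / real (Suc j) ^ 2))"
proof -
  have "K / real (Suc n + j) ^ 4 \<le> K / real (Suc n) ^ 2 * (1 / real (Suc j) ^ 2)" for j
  proof -
    have "real (Suc n) ^ 2 * real (Suc j) ^ 2 \<le> real (Suc n + j) ^ 2 * real (Suc n + j) ^ 2"
      by (intro mult_mono power_mono) auto
    also have "\<dots> = real (Suc n + j) ^ 4"
      by (simp flip: power_add)
    finally have "K / real (Suc n + j) ^ 4 \<le> K / (real (Suc n) ^ 2 * real (Suc j) ^ 2)"
      using assms by (intro divide_left_mono) auto
    then show ?thesis
      by simp
  qed
  then have "(\<Sum>j. ennreal (K / real (Suc n + j) ^ 4))
      \<le> (\<Sum>j. ennreal (K / real (Suc n) ^ 2 * (1 / real (Suc j) ^ 2)))"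
    by (intro suminf_le[OF _ summableI summableI] ennreal_leI) blast
  also have "\<dots> = ennreal (\<Sum>j. K / real (Suc n) ^ 2 * (1 / real (Suc j) ^ 2))"
    using assms summable_inverse_Suc_square by (intro suminf_ennreal2 summable_mult) auto
  also have "(\<Sum>j. K / real (Suc n) ^ 2 * (1 / real (Suc j) ^ 2))
      = K / real (Suc n) ^ 2 * (\<Sum>j. 1 / real (Suc j) ^ 2)"
    by (rule suminf_mult[OF summable_inverse_Suc_square])
  finally show ?thesis .
qed

lemma nn_integral_enat_finite_if_tail_quadratic:
  assumes "X \<in> measurable M (count_space UNIV)" and "c \<ge> 0"
    and tail: "\<And>n. emeasure M {\<omega> \<in> space M. enat n < X \<omega>} \<le> ennreal (c / real (Suc n) ^ 2)"
  shows "(\<integral>\<^sup>+ \<omega>. ennreal_of_enat (X \<omega>) \<partial>M) < \<infinity>"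
proof -
  have "(\<integral>\<^sup>+ \<omega>. ennreal_of_enat (X \<omega>) \<partial>M) = (\<Sum>n. emeasure M {\<omega> \<in> space M. enat n < X \<omega>})"
    using assms(1) by (rule nn_integral_enat_function)
  also have "\<dots> \<le> (\<Sum>n. ennreal (c * (1 / real (Suc n) ^ 2)))"
    using tail by (intro suminf_le[OF _ summableI summableI]) simp
  also have "\<dots> = ennreal (\<Sum>n. c * (1 / real (Suc n) ^ 2))"
    using \<open>c \<ge> 0\<close> summable_inverse_Suc_square by (intro suminf_ennreal2 summable_mult) auto
  finally show ?thesis
    by (rule le_less_trans) simp
qed

section \<open>Probability that a time step is bad\<close>

text \<open>Half the expected number \<open>\<ge> t\<^bsup>2/3\<^esup>/M\<close> of forced visits to stream 1 up to time \<open>t\<close>.\<close>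
definition min_samples :: "nat \<Rightarrow> nat \<Rightarrow> real" where
  "min_samples M t = (real t powr (1/3))\<^sup>2 / (2 * real M)"

lemma min_samples_pos: "1 \<le> M \<Longrightarrow> 1 \<le> t \<Longrightarrow> 0 < min_samples M t"
  unfolding min_samples_def by simp

lemma cube_powr_one_third: "(real t powr (1/3)) ^ 3 = real t"
proof -
  have "(real t powr (1/3)) ^ 3 = real t powr (1/3 + 1/3 + 1/3)"
    unfolding power3_eq_cube by (simp only: powr_add)
  then show ?thesis by simp
qed

locale focus_model = prob_space P
  for P :: "'a measure" and Y :: "idx \<Rightarrow> 'a \<Rightarrow> real" and M :: nat and mu :: real +
  assumes M_gt_1: "M > 1" and mu_nonzero: "mu \<noteq> 0"
    and indep_Y: "indep_vars (\<lambda>_. borel) Y UNIV"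
    and Noise_normal: "\<And>m i. distributed P lborel (Y (Noise m i)) (\<lambda>x. ennreal (normal_density 0 1 x))"
    and Gate_uniform: "\<And>t. distributed P lborel (Y (Gate t)) (indicator {0..1})"
    and Pick_uniform: "\<And>t. distributed P lborel (Y (Pick t)) (indicator {0..1})"
begin

lemma measurable_Y [measurable]: "Y i \<in> borel_measurable P"
  using indep_Y unfolding indep_vars_def by auto

lemma indep_forced_indicators:
  "indep_vars (\<lambda>_. borel) (\<lambda>s. indicator {\<omega>. forced_to_stream1 M (\<lambda>i. Y i \<omega>) s} :: 'a \<Rightarrow> real) S"
proof -
  define K where "K s = {Gate s, Pick s}" for s
  have "indep_vars (\<lambda>s. PiM (K s) (\<lambda>_. borel)) (\<lambda>s \<omega>. restrict (\<lambda>i. Y i \<omega>) (K s)) S"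
    by (rule indep_vars_restrict[OF indep_Y]) (auto simp: K_def disjoint_family_on_def)
  moreover have "(\<lambda>f. indicator {f. forced_to_stream1 M f s} f :: real)
      \<in> borel_measurable (PiM (K s) (\<lambda>_. borel))" for s
  proof -
    have [measurable]: "(\<lambda>f. f i) \<in> borel_measurable (PiM (K s) (\<lambda>_. borel))" if "i \<in> K s" for i
      using that by (rule measurable_component_singleton)
    show ?thesis
      unfolding forced_to_stream1_def by (simp add: K_def)
  qed
  ultimately have "indep_vars (\<lambda>_. borel)
      (\<lambda>s \<omega>. indicator {f. forced_to_stream1 M f s} (restrict (\<lambda>i. Y i \<omega>) (K s)) :: real) S"
    by (rule indep_vars_compose2)
  moreover have "forced_to_stream1 M (restrict (\<lambda>i. Y i \<omega>) (K s)) s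
      \<longleftrightarrow> forced_to_stream1 M (\<lambda>i. Y i \<omega>) s" for s \<omega>
    by (simp add: forced_to_stream1_def K_def)
  ultimately show ?thesis
    by (simp add: indicator_def[abs_def])
qed

lemma prob_forced:
  assumes "1 \<le> s"
  shows "prob {\<omega> \<in> space P. forced_to_stream1 M (\<lambda>i. Y i \<omega>) s}
    = 1 / real s powr (1/3) * (1 / real M)"
proof -
  define g where "g = 1 / real s powr (1/3)"
  have "0 < g" "g \<le> 1"
    using assms by (auto simp: g_def ge_one_powr_ge_zero)
  define A where "A i = (if i = Gate s then {..<g} else {0..<1 / real M})" for i
  have "{\<omega> \<in> space P. forced_to_stream1 M (\<lambda>i. Y i \<omega>) s}
      = (\<Inter>i\<in>{Gate s, Pick s}. Y i -` A i \<inter> space P)"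
    by (auto simp: forced_to_stream1_def A_def g_def)
  also have "prob \<dots> = (\<Prod>i\<in>{Gate s, Pick s}. prob (Y i -` A i \<inter> space P))"
    by (rule indep_varsD[OF indep_Y]) (auto simp: A_def)
  also have "\<dots> = prob (Y (Gate s) -` {..<g} \<inter> space P)
      * prob (Y (Pick s) -` {0..<1 / real M} \<inter> space P)"
    by (simp add: A_def)
  also have "prob (Y (Gate s) -` {..<g} \<inter> space P) = g - 0"
    using \<open>0 < g\<close> \<open>g \<le> 1\<close> by (intro prob_uniform_interval[OF Gate_uniform]) auto
  also have "prob (Y (Pick s) -` {0..<1 / real M} \<inter> space P) = 1 / real M - 0"
  proof (rule prob_uniform_interval[OF Pick_uniform])
    have "1 / real M \<le> 1"
      using M_gt_1 by simp
    then show "{0..1} \<inter> {0..<1 / real M} = {0..<1 / real M}"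
      by auto
  qed auto
  finally show ?thesis
    by (simp add: g_def)
qed

text \<open>Each of the \<open>t\<close> terms is at least \<open>t\<^bsup>-1/3\<^esup>/M\<close>.\<close>
lemma sum_prob_forced_ge:
  assumes "1 \<le> t"
  shows "2 * min_samples M t \<le> (\<Sum>s\<in>{1..t}. prob {\<omega> \<in> space P. forced_to_stream1 M (\<lambda>i. Y i \<omega>) s})"
proof -
  define u where "u = real t powr (1/3)"
  have "u > 0" and ut: "u ^ 3 = real t"
    using assms cube_powr_one_third unfolding u_def by auto
  have "2 * min_samples M t = (\<Sum>s\<in>{1..t}. 1 / u * (1 / real M))"
    using \<open>u > 0\<close> M_gt_1 unfolding min_samples_def u_def[symmetric]
    by (simp add: ut[symmetric] field_simps power2_eq_square power3_eq_cube)
  also have "\<dots> \<le> (\<Sum>s\<in>{1..t}. prob {\<omega> \<in> space P. forced_to_stream1 M (\<lambda>i. Y i \<omega>) s})"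
  proof (rule sum_mono)
    fix s assume s: "s \<in> {1..t}"
    have "real s powr (1/3) \<le> u"
      unfolding u_def using s by (intro powr_mono2) auto
    then have "1 / u * (1 / real M) \<le> 1 / real s powr (1/3) * (1 / real M)"
      using s \<open>u > 0\<close> by (intro mult_right_mono divide_left_mono) auto
    with s show "1 / u * (1 / real M) \<le> prob {\<omega> \<in> space P. forced_to_stream1 M (\<lambda>i. Y i \<omega>) s}"
      by (simp add: prob_forced)
  qed
  finally show ?thesis .
qed

lemma prob_few_forced_le_exp:
  assumes "1 \<le> t"
  shows "prob {\<omega> \<in> space P. real (card {s \<in> {1..t}. forced_to_stream1 M (\<lambda>i. Y i \<omega>) s})
      < min_samples M t} \<le> exp (- (real t powr (1/3)) / (2 * (real M)\<^sup>2))"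
proof -
  define u where "u = real t powr (1/3)"
  have "u > 0" and ut: "u ^ 3 = real t"
    using assms cube_powr_one_third unfolding u_def by auto
  have min_samples_u: "min_samples M t = u\<^sup>2 / (2 * real M)"
    by (simp add: min_samples_def u_def)
  define X where "X s = (indicator {\<omega>. forced_to_stream1 M (\<lambda>i. Y i \<omega>) s} :: 'a \<Rightarrow> real)" for s
  have [measurable]: "X s \<in> borel_measurable P" for s
    unfolding X_def forced_to_stream1_def by measurable
  define \<mu> where "\<mu> = (\<Sum>s\<in>{1..t}. expectation (X s))"
  interpret Hoeffding_ineq P "{1..t}" X "\<lambda>_. 0" "\<lambda>_. 1" \<mu>
    by unfold_locales (auto simp: \<mu>_def X_def indep_forced_indicators[folded X_def])
  have "expectation (X s) = prob {\<omega> \<in> space P. forced_to_stream1 M (\<lambda>i. Y i \<omega>) s}" for s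
    by (simp add: X_def Collect_conj_eq Int_commute)
  then have mean: "2 * min_samples M t \<le> \<mu>"
    using sum_prob_forced_ge[OF assms] by (simp add: \<mu>_def)
  have card_eq: "real (card {s \<in> {1..t}. forced_to_stream1 M (\<lambda>i. Y i \<omega>) s}) = (\<Sum>s\<in>{1..t}. X s \<omega>)"
    for \<omega>
    by (simp add: X_def indicator_def sum.If_cases Int_def)
  have "prob {\<omega> \<in> space P. real (card {s \<in> {1..t}. forced_to_stream1 M (\<lambda>i. Y i \<omega>) s})
      < min_samples M t}
    \<le> prob {\<omega> \<in> space P. (\<Sum>s\<in>{1..t}. X s \<omega>) \<le> \<mu> - min_samples M t}"
    using mean unfolding card_eq by (intro finite_measure_mono) auto
  also have "\<dots> \<le> exp (- 2 * (min_samples M t)\<^sup>2 / (\<Sum>s\<in>{1..t}. (1 - 0)\<^sup>2))"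
    using assms M_gt_1 by (intro Hoeffding_ineq_le) (auto simp: min_samples_def)
  also have "- 2 * (min_samples M t)\<^sup>2 / (\<Sum>s\<in>{1..t}. (1 - 0)\<^sup>2) = - u / (2 * (real M)\<^sup>2)"
    using \<open>u > 0\<close> M_gt_1 unfolding min_samples_u
    by (simp add: ut[symmetric] field_simps power2_eq_square power3_eq_cube)
  finally show ?thesis
    by (simp add: u_def)
qed

lemma segment_sum_std_normal:
  assumes "k < n"
  shows "distributed P lborel (\<lambda>\<omega>. (\<Sum>i=k+1..n. Y (Noise m i) \<omega>) / sqrt (real (n - k)))
    (\<lambda>x. ennreal (std_normal_density x))"
proof -
  let ?I = "Noise m ` {k+1..n}"
  have "distributed P lborel (\<lambda>\<omega>. \<Sum>i\<in>?I. Y i \<omega>)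
      (normal_density (\<Sum>i\<in>?I. 0) (sqrt (\<Sum>i\<in>?I. 1\<^sup>2)))"
    by (rule sum_indep_normal[where \<sigma> = "\<lambda>_. 1" and \<mu> = "\<lambda>_. 0"])
      (use assms in \<open>auto intro: indep_vars_subset[OF indep_Y] Noise_normal\<close>)
  moreover have "(\<lambda>\<omega>. \<Sum>i\<in>?I. Y i \<omega>) = (\<lambda>\<omega>. \<Sum>i=k+1..n. Y (Noise m i) \<omega>)"
    by (auto simp: sum.reindex inj_on_def)
  moreover have "(\<Sum>i\<in>?I. (1::real)\<^sup>2) = real (n - k)"
    by (simp add: card_image inj_on_def)
  ultimately have "distributed P lborel (\<lambda>\<omega>. \<Sum>i=k+1..n. Y (Noise m i) \<omega>)
      (normal_density 0 (sqrt (real (n - k))))"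
    by simp
  then show ?thesis
    using assms normal_standard_normal_convert[of "sqrt (real (n - k))" _ 0] by simp
qed

lemma segment_sum_tail:
  assumes "k < n" "r > 0"
  shows "prob {\<omega> \<in> space P. r * sqrt (real (n - k)) \<le> \<bar>\<Sum>i=k+1..n. Y (Noise m i) \<omega>\<bar>}
    \<le> fact (2 * q) / (2 ^ q * fact q) / r ^ (2 * q)"
proof -
  have "r * sqrt (real (n - k)) \<le> \<bar>w\<bar> \<longleftrightarrow> r \<le> \<bar>w / sqrt (real (n - k))\<bar>" for w
    using assms by (simp add: abs_divide pos_le_divide_eq)
  then show ?thesis
    using std_normal_tail_le_moment[OF segment_sum_std_normal[OF assms(1)] assms(2)] by simp
qed

definition segment_const :: real where
  "segment_const = fact 18 / (2 ^ 9 * fact 9) * (2 / \<bar>mu\<bar>) ^ 18 * (2 * real M) ^ 9"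

text \<open>With the 18th moment each segment event has probability \<open>O(t\<^sup>-\<^sup>6)\<close>, which absorbs
  the union over \<open>M t\<^sup>2\<close> segments and still leaves \<open>t\<^sup>-\<^sup>4\<close>.\<close>
lemma moment_bound_eq_segment_const:
  assumes "1 \<le> t"
  shows "fact 18 / (2 ^ 9 * fact 9) / ((\<bar>mu\<bar> / 2) ^ 18 * min_samples M t ^ 9)
    = segment_const / real t ^ 6"
proof -
  have "min_samples M t ^ 9 = ((real t powr (1/3)) ^ 3) ^ 6 / (2 * real M) ^ 9"
    by (simp add: min_samples_def power_divide flip: power_mult)
  also have "\<dots> = real t ^ 6 / (2 * real M) ^ 9"
    by (simp add: cube_powr_one_third)
  finally have min_samples_pow: "min_samples M t ^ 9 = real t ^ 6 / (2 * real M) ^ 9" .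
  show ?thesis
    unfolding min_samples_pow using assms mu_nonzero M_gt_1
    by (simp add: segment_const_def field_simps power_divide)
qed

definition few_samples :: "nat \<Rightarrow> 'a set" where
  "few_samples t = {\<omega> \<in> space P.
     real (card {s \<in> {1..t}. forced_to_stream1 M (\<lambda>i. Y i \<omega>) s}) < min_samples M t}"

definition stream1_deviates :: "nat \<Rightarrow> nat \<Rightarrow> 'a set" where
  "stream1_deviates t n = {\<omega> \<in> space P.
     min_samples M t \<le> real n \<and> \<bar>mu\<bar> * real n / 2 < \<bar>\<Sum>i=1..n. Y (Noise 1 i) \<omega>\<bar>}"

definition null_segment_large :: "nat \<Rightarrow> nat \<Rightarrow> nat \<Rightarrow> nat \<Rightarrow> 'a set" where
  "null_segment_large t m n k = {\<omega> \<in> space P.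
     k < n \<and> mu\<^sup>2 * min_samples M t * real (n - k) / 4 \<le> (\<Sum>i=k+1..n. Y (Noise m i) \<omega>)\<^sup>2}"

definition bad_time :: "nat \<Rightarrow> 'a set" where
  "bad_time t = few_samples t \<union> (\<Union>n\<in>{1..t}. stream1_deviates t n)
     \<union> (\<Union>(m, n, k)\<in>{2..M} \<times> {1..t} \<times> {..<t}. null_segment_large t m n k)"

lemma sets_few_samples [measurable]: "few_samples t \<in> sets P"
proof -
  have "real (card {s \<in> {1..t}. forced_to_stream1 M (\<lambda>i. Y i \<omega>) s})
      = (\<Sum>s\<in>{1..t}. of_bool (forced_to_stream1 M (\<lambda>i. Y i \<omega>) s))" for \<omega>
    by (simp add: sum.If_cases Int_def)
  then show ?thesis
    unfolding few_samples_def forced_to_stream1_def by simp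
qed

lemma sets_stream1_deviates [measurable]: "stream1_deviates t n \<in> sets P"
  unfolding stream1_deviates_def by measurable

lemma sets_null_segment_large [measurable]: "null_segment_large t m n k \<in> sets P"
  unfolding null_segment_large_def by measurable

lemma sets_bad_time [measurable]: "bad_time t \<in> sets P"
  unfolding bad_time_def by (intro sets.Un sets.finite_UN) (auto split: prod.split)

lemma dominates_unless_bad_time:
  assumes "1 \<le> t" "\<omega> \<in> space P" "\<omega> \<notin> bad_time t"
  shows "Max (T_run M mu (\<lambda>i. Y i \<omega>) t ` ({1..M} - {1})) < T_run M mu (\<lambda>i. Y i \<omega>) t 1"
proof (rule stream1_dominates[OF M_gt_1 mu_nonzero])
  show "0 < min_samples M t"
    using assms M_gt_1 by (intro min_samples_pos) auto
  have "\<omega> \<notin> few_samples t"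
    using assms(3) unfolding bad_time_def by blast
  then show "min_samples M t \<le> real (card {s \<in> {1..t}. forced_to_stream1 M (\<lambda>i. Y i \<omega>) s})"
    using assms(2) unfolding few_samples_def by simp
  fix n assume n: "min_samples M t \<le> real n" "n \<le> t"
  with \<open>0 < min_samples M t\<close> have "n \<in> {1..t}"
    by (cases n) auto
  then have "\<omega> \<notin> stream1_deviates t n"
    using assms(3) unfolding bad_time_def by blast
  then show "\<bar>\<Sum>i = 1..n. Y (Noise 1 i) \<omega>\<bar> \<le> \<bar>mu\<bar> * real n / 2"
    using assms(2) n unfolding stream1_deviates_def by simp
next
  fix m k n assume mkn: "m \<in> {2..M}" "k < n" "n \<le> t"
  then have "(m, n, k) \<in> {2..M} \<times> {1..t} \<times> {..<t}"
    by auto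
  then have "\<omega> \<notin> null_segment_large t m n k"
    using assms(3) unfolding bad_time_def by blast
  then show "(\<Sum>i = k + 1..n. Y (Noise m i) \<omega>)\<^sup>2 < mu\<^sup>2 * min_samples M t * real (n - k) / 4"
    using assms(2) mkn unfolding null_segment_large_def by simp
qed

lemma prob_stream1_deviates:
  assumes "1 \<le> t"
  shows "prob (stream1_deviates t n) \<le> segment_const / real t ^ 6"
proof (cases "min_samples M t \<le> real n")
  case False
  then show ?thesis
    by (simp add: stream1_deviates_def segment_const_def)
next
  case True
  define r where "r = \<bar>mu\<bar> * sqrt (real n) / 2"
  have "0 < min_samples M t"
    using assms M_gt_1 by (intro min_samples_pos) auto
  with True have "0 < n" by auto
  then have "r > 0"
    using mu_nonzero by (simp add: r_def)
  have "r * sqrt (real (n - 0)) = \<bar>mu\<bar> * real n / 2"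
    by (simp add: r_def mult.assoc)
  then have "stream1_deviates t n
      \<subseteq> {\<omega> \<in> space P. r * sqrt (real (n - 0)) \<le> \<bar>\<Sum>i=0+1..n. Y (Noise 1 i) \<omega>\<bar>}"
    by (auto simp: stream1_deviates_def)
  then have "prob (stream1_deviates t n)
      \<le> prob {\<omega> \<in> space P. r * sqrt (real (n - 0)) \<le> \<bar>\<Sum>i=0+1..n. Y (Noise 1 i) \<omega>\<bar>}"
    by (intro finite_measure_mono) auto
  also have "\<dots> \<le> fact 18 / (2 ^ 9 * fact 9) / r ^ 18"
    using segment_sum_tail[OF \<open>0 < n\<close> \<open>r > 0\<close>, of 1 9] by simp
  also have "\<dots> \<le> fact 18 / (2 ^ 9 * fact 9) / ((\<bar>mu\<bar> / 2) ^ 18 * min_samples M t ^ 9)"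
  proof -
    have "r ^ 18 = (\<bar>mu\<bar> / 2) ^ 18 * real n ^ 9"
      using real_sqrt_power_even[of "real n" 9] by (simp add: r_def power_mult_distrib power_divide)
    moreover have "min_samples M t ^ 9 \<le> real n ^ 9"
      using True \<open>0 < min_samples M t\<close> by (intro power_mono) auto
    ultimately show ?thesis
      using mu_nonzero \<open>0 < min_samples M t\<close>
      by (intro divide_left_mono mult_left_mono) auto
  qed
  also have "\<dots> = segment_const / real t ^ 6"
    by (rule moment_bound_eq_segment_const[OF assms])
  finally show ?thesis .
qed

lemma prob_null_segment_large:
  assumes "1 \<le> t"
  shows "prob (null_segment_large t m n k) \<le> segment_const / real t ^ 6"
proof (cases "k < n")
  case False
  then show ?thesis
    by (simp add: null_segment_large_def segment_const_def)
next
  case True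
  have "0 < min_samples M t"
    using assms M_gt_1 by (intro min_samples_pos) auto
  define r where "r = \<bar>mu\<bar> * sqrt (min_samples M t) / 2"
  have "r > 0"
    using \<open>0 < min_samples M t\<close> mu_nonzero by (simp add: r_def)
  have "mu\<^sup>2 * min_samples M t * real (n - k) / 4 = (r * sqrt (real (n - k)))\<^sup>2"
    using \<open>0 < min_samples M t\<close> by (simp add: r_def power_mult_distrib power_divide)
  then have "mu\<^sup>2 * min_samples M t * real (n - k) / 4 \<le> w\<^sup>2 \<longleftrightarrow> r * sqrt (real (n - k)) \<le> \<bar>w\<bar>"
    for w
    using \<open>r > 0\<close> by (simp add: abs_le_square_iff[symmetric])
  then have "null_segment_large t m n k
      = {\<omega> \<in> space P. r * sqrt (real (n - k)) \<le> \<bar>\<Sum>i=k+1..n. Y (Noise m i) \<omega>\<bar>}"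
    using True by (auto simp: null_segment_large_def)
  then have "prob (null_segment_large t m n k) \<le> fact 18 / (2 ^ 9 * fact 9) / r ^ 18"
    using segment_sum_tail[OF True \<open>r > 0\<close>, of m 9] by simp
  also have "r ^ 18 = (\<bar>mu\<bar> / 2) ^ 18 * min_samples M t ^ 9"
    using \<open>0 < min_samples M t\<close>
    using real_sqrt_power_even[of "min_samples M t" 9]
    by (simp add: r_def power_mult_distrib power_divide)
  also have "fact 18 / (2 ^ 9 * fact 9) / \<dots> = segment_const / real t ^ 6"
    by (rule moment_bound_eq_segment_const[OF assms])
  finally show ?thesis .
qed

definition bad_time_const :: real where
  "bad_time_const = fact 12 * (2 * (real M)\<^sup>2) ^ 12 + (1 + real M) * segment_const"

lemma bad_time_const_nonneg: "0 \<le> bad_time_const"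
  by (simp add: bad_time_const_def segment_const_def)

lemma prob_few_samples:
  assumes "1 \<le> t"
  shows "prob (few_samples t) \<le> fact 12 * (2 * (real M)\<^sup>2) ^ 12 / real t ^ 4"
proof -
  define u where "u = real t powr (1/3)"
  have "u > 0"
    using assms by (simp add: u_def)
  have "prob (few_samples t) \<le> exp (- (u / (2 * (real M)\<^sup>2)))"
    using prob_few_forced_le_exp[OF assms] by (simp add: few_samples_def u_def)
  also have "\<dots> \<le> fact 12 / (u / (2 * (real M)\<^sup>2)) ^ 12"
    using \<open>u > 0\<close> M_gt_1 by (intro exp_neg_le_fact_div_power) simp
  also have "\<dots> = fact 12 * (2 * (real M)\<^sup>2) ^ 12 / (u ^ 3) ^ 4"
    using \<open>u > 0\<close> M_gt_1 by (simp add: power_divide flip: power_mult)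
  also have "u ^ 3 = real t"
    by (simp add: u_def cube_powr_one_third)
  finally show ?thesis .
qed

lemma prob_bad_time:
  assumes "1 \<le> t"
  shows "prob (bad_time t) \<le> bad_time_const / real t ^ 4"
proof -
  let ?I = "{2..M} \<times> {1..t} \<times> {..<t}"
  have "segment_const \<ge> 0"
    by (simp add: segment_const_def)
  have "prob (\<Union>n\<in>{1..t}. stream1_deviates t n) \<le> (\<Sum>n\<in>{1..t}. prob (stream1_deviates t n))"
    by (rule measure_UNION_le) auto
  also have "\<dots> \<le> (\<Sum>n\<in>{1..t}. segment_const / real t ^ 6)"
    by (intro sum_mono prob_stream1_deviates[OF assms])
  also have "\<dots> = real t ^ 1 * (segment_const / real t ^ 6)"
    by simp
  also have "\<dots> \<le> segment_const / real t ^ 4"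
    using assms \<open>segment_const \<ge> 0\<close> by (intro power_mult_divide_power_le) auto
  finally have stream1: "prob (\<Union>n\<in>{1..t}. stream1_deviates t n) \<le> segment_const / real t ^ 4" .
  have "prob (\<Union>(m, n, k)\<in>?I. null_segment_large t m n k)
      \<le> (\<Sum>p\<in>?I. prob (case p of (m, n, k) \<Rightarrow> null_segment_large t m n k))"
    by (rule measure_UNION_le) (auto split: prod.split)
  also have "\<dots> \<le> (\<Sum>_\<in>?I. segment_const / real t ^ 6)"
    using prob_null_segment_large[OF assms] by (intro sum_mono) (auto split: prod.split)
  also have "\<dots> = real (M - 1) * (real t ^ 2 * (segment_const / real t ^ 6))"
    by (simp add: card_cartesian_product power2_eq_square)
  also have "\<dots> \<le> real M * (segment_const / real t ^ 4)"
    using assms \<open>segment_const \<ge> 0\<close>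
    by (intro mult_mono power_mult_divide_power_le) auto
  finally have null: "prob (\<Union>(m, n, k)\<in>?I. null_segment_large t m n k)
      \<le> real M * (segment_const / real t ^ 4)" .
  have "prob (bad_time t) \<le> prob (few_samples t \<union> (\<Union>n\<in>{1..t}. stream1_deviates t n))
      + prob (\<Union>(m, n, k)\<in>?I. null_segment_large t m n k)"
    unfolding bad_time_def by (rule measure_Un_le) (auto split: prod.split)
  also have "prob (few_samples t \<union> (\<Union>n\<in>{1..t}. stream1_deviates t n))
      \<le> prob (few_samples t) + prob (\<Union>n\<in>{1..t}. stream1_deviates t n)"
    by (rule measure_Un_le) auto
  finally show ?thesis
    using prob_few_samples[OF assms] stream1 null
    by (simp add: bad_time_const_def add_divide_distrib distrib_right)
qed

section \<open>Finite expectation of \<open>t0\<close>\<close>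

lemma t0_gt_subset_bad_times:
  "{\<omega> \<in> space P. enat n < t0 M mu (\<lambda>i. Y i \<omega>)} \<subseteq> (\<Union>j. bad_time (Suc n + j))"
proof
  fix \<omega> assume \<omega>: "\<omega> \<in> {\<omega> \<in> space P. enat n < t0 M mu (\<lambda>i. Y i \<omega>)}"
  show "\<omega> \<in> (\<Union>j. bad_time (Suc n + j))"
  proof (rule ccontr)
    assume not_bad: "\<omega> \<notin> (\<Union>j. bad_time (Suc n + j))"
    have "dominates_after M mu (\<lambda>i. Y i \<omega>) n"
      unfolding dominates_after_def
    proof (intro allI impI)
      fix t assume "n < t"
      have "\<omega> \<notin> bad_time (Suc n + (t - Suc n))"
        using not_bad by blast
      with \<open>n < t\<close> \<omega> show "Max (T_run M mu (\<lambda>i. Y i \<omega>) t ` ({1..M} - {1}))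
          < T_run M mu (\<lambda>i. Y i \<omega>) t 1"
        by (intro dominates_unless_bad_time) auto
    qed
    then have "t0 M mu (\<lambda>i. Y i \<omega>) \<le> enat n"
      unfolding t0_def by (auto intro: Least_le)
    with \<omega> show False
      by auto
  qed
qed

lemma emeasure_t0_gt:
  "emeasure P {\<omega> \<in> space P. enat n < t0 M mu (\<lambda>i. Y i \<omega>)}
    \<le> ennreal (bad_time_const / real (Suc n) ^ 2 * (\<Sum>j. 1 / real (Suc j) ^ 2))"
proof -
  have "emeasure P {\<omega> \<in> space P. enat n < t0 M mu (\<lambda>i. Y i \<omega>)}
      \<le> emeasure P (\<Union>j. bad_time (Suc n + j))"
    by (rule emeasure_mono[OF t0_gt_subset_bad_times]) measurable
  also have "\<dots> \<le> (\<Sum>j. emeasure P (bad_time (Suc n + j)))"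
    by (rule emeasure_subadditive_countably) auto
  also have "\<dots> \<le> (\<Sum>j. ennreal (bad_time_const / real (Suc n + j) ^ 4))"
  proof (rule suminf_le[OF _ summableI summableI])
    fix j
    have "prob (bad_time (Suc n + j)) \<le> bad_time_const / real (Suc n + j) ^ 4"
      by (rule prob_bad_time) simp
    then show "emeasure P (bad_time (Suc n + j)) \<le> ennreal (bad_time_const / real (Suc n + j) ^ 4)"
      unfolding emeasure_eq_measure by (rule ennreal_leI)
  qed
  also have "\<dots> \<le> ennreal (bad_time_const / real (Suc n) ^ 2 * (\<Sum>j. 1 / real (Suc j) ^ 2))"
    by (rule suminf_inverse_power4_tail_le[OF bad_time_const_nonneg])
  finally show ?thesis .
qed

lemma nn_integral_t0_finite: "(\<integral>\<^sup>+ \<omega>. ennreal_of_enat (t0 M mu (\<lambda>i. Y i \<omega>)) \<partial>P) < \<infinity>"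
proof (rule nn_integral_enat_finite_if_tail_quadratic)
  show "(\<lambda>\<omega>. t0 M mu (\<lambda>i. Y i \<omega>)) \<in> measurable P (count_space UNIV)"
    by (rule measurable_t0) simp
  show "0 \<le> bad_time_const * (\<Sum>j. 1 / real (Suc j) ^ 2)"
    using bad_time_const_nonneg summable_inverse_Suc_square by (simp add: suminf_nonneg)
  show "emeasure P {\<omega> \<in> space P. enat n < t0 M mu (\<lambda>i. Y i \<omega>)}
      \<le> ennreal (bad_time_const * (\<Sum>j. 1 / real (Suc j) ^ 2) / real (Suc n) ^ 2)" for n
    using emeasure_t0_gt[of n] by (simp add: field_simps)
qed

end

theorem lemma4:
  fixes P :: "'a measure" and Y :: "idx \<Rightarrow> 'a \<Rightarrow> real" and M :: nat and mu :: real
  assumes "prob_space P"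
    and "M > 1" and "mu \<noteq> 0"
    and "prob_space.indep_vars P (\<lambda>_. borel) Y UNIV"
    and "\<And>m i. distributed P lborel (Y (Noise m i)) (\<lambda>x. ennreal (normal_density 0 1 x))"
    and "\<And>t. distributed P lborel (Y (Gate t)) (indicator {0..1})"
    and "\<And>t. distributed P lborel (Y (Pick t)) (indicator {0..1})"
    and "\<And>t. distributed P lborel (Y (TieM t)) (indicator {0..1})"
    and "\<And>t. distributed P lborel (Y (TieK t)) (indicator {0..1})"
  shows "(\<lambda>\<omega>. ennreal_of_enat (t0 M mu (\<lambda>i. Y i \<omega>))) \<in> borel_measurable P
     \<and> (\<integral>\<^sup>+ \<omega>. ennreal_of_enat (t0 M mu (\<lambda>i. Y i \<omega>)) \<partial>P) < \<infinity>"
proof -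
  \<comment> \<open>The tie-breaking variables need no distributional assumption: every bad event is
    expressed through the noise, gate and pick variables only.\<close>
  interpret focus_model P Y M mu
    using assms(1-7) by (simp add: focus_model_def focus_model_axioms_def)
  have "(\<lambda>\<omega>. t0 M mu (\<lambda>i. Y i \<omega>)) \<in> measurable P (count_space UNIV)"
    by (rule measurable_t0) simp
  then have "(\<lambda>\<omega>. (\<lambda>e _. ennreal_of_enat e) (t0 M mu (\<lambda>i. Y i \<omega>)) \<omega>) \<in> borel_measurable P"
    by (rule measurable_compose_countable[rotated]) simp
  then show ?thesis
    using nn_integral_t0_finite ..
qed

end
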